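(* Let $\sigma_0>0$. Define $f:2^{[n]}\to\mathbb R$ by $f(S)=\mathbb{E}\max_{i\in[n]}X_i$, where $X_1,\dots,X_n$ are independent, $X_i\sim\mathcal N(0,\sigma_0^2)$ for $i\in S$ and $X_i\equiv0$ for $i\notin S$. Then $f$ is submodular.
   Context: A set function $f:2^{[n]}\to\mathbb R$ is submodular if $f(A\cup\{x\})-f(A)\ge f(B\cup\{x\})-f(B)$ for all $A\subseteq B\subseteq[n]$ and $x\notin B$. *)

theory Defs
  imports "HOL-Probability.Probability"
begin

definition submodular_on :: "'a set \<Rightarrow> ('a set \<Rightarrow> real) \<Rightarrow> bool" where
  "submodular_on V f \<longleftrightarrow>
     (\<forall>A B x. A \<subseteq> B \<longrightarrow> B \<subseteq> V \<longrightarrow> x \<in> V \<longrightarrow> x \<notin> B \<longrightarrow>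
        f (A \<union> {x}) - f A \<ge> f (B \<union> {x}) - f B)"

text \<open>Law of N(0, s^2): density w.r.t. Lebesgue measure (second parameter is std. dev.).\<close>
definition gauss :: "real \<Rightarrow> real measure" where
  "gauss s = density lborel (normal_density 0 s)"

definition gauss_vec :: "nat \<Rightarrow> real \<Rightarrow> nat set \<Rightarrow> (nat \<Rightarrow> real) measure" where
  "gauss_vec n s S = PiM {..<n} (\<lambda>i. if i \<in> S then gauss s else return lborel 0)"

definition exp_max :: "nat \<Rightarrow> real \<Rightarrow> nat set \<Rightarrow> real" where
  "exp_max n s S = (\<integral>x. Max (x ` {..<n}) \<partial>gauss_vec n s S)"

end

theory Submission
  imports Defs
begin

(* Realise all the vectors on one probability space: if Y is a vector of i.i.d. N(0, sigma^2)
   variables, the law gauss_vec n sigma S is that of Y with the coordinates outside S set to 0.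
   For each fixed outcome y, the function S \<mapsto> max of the masked y is submodular, since adding j
   to S only matters through max (y j) (...) and the masked maximum is monotone as long as some
   coordinate still contributes the floor 0. Submodularity is preserved by taking expectations. *)

lemma submodular_on_integral:
  fixes F :: "'b set \<Rightarrow> 'a \<Rightarrow> real"
  assumes submod: "\<And>y. submodular_on V (\<lambda>S. F S y)"
    and int: "\<And>S. S \<subseteq> V \<Longrightarrow> integrable M (F S)"
  shows "submodular_on V (\<lambda>S. \<integral>y. F S y \<partial>M)"
  unfolding submodular_on_def
proof (intro allI impI)
  fix A B x assume "A \<subseteq> B" "B \<subseteq> V" "x \<in> V" "x \<notin> B"
  then have ints: "integrable M (F A)" "integrable M (F B)"
      "integrable M (F (A \<union> {x}))" "integrable M (F (B \<union> {x}))"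
    by (auto intro: int)
  have "F (B \<union> {x}) y + F A y \<le> F (A \<union> {x}) y + F B y" for y
    using submod[of y, unfolded submodular_on_def, rule_format, of A B x] \<open>A \<subseteq> B\<close> \<open>B \<subseteq> V\<close> \<open>x \<in> V\<close> \<open>x \<notin> B\<close>
    by simp
  then have "(\<integral>y. F (B \<union> {x}) y + F A y \<partial>M) \<le> (\<integral>y. F (A \<union> {x}) y + F B y \<partial>M)"
    using ints by (intro integral_mono) auto
  then show "(\<integral>y. F (B \<union> {x}) y \<partial>M) - (\<integral>y. F B y \<partial>M) \<le> (\<integral>y. F (A \<union> {x}) y \<partial>M) - (\<integral>y. F A y \<partial>M)"
    using ints by simp
qed

definition masked_Max :: "'a set \<Rightarrow> 'a set \<Rightarrow> ('a \<Rightarrow> real) \<Rightarrow> real" where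
  "masked_Max V S y = Max ((\<lambda>i. if i \<in> S then y i else 0) ` V)"

lemma masked_Max_ge:
  assumes "finite V" "i \<in> V"
  shows "(if i \<in> S then y i else 0) \<le> masked_Max V S y"
  unfolding masked_Max_def using assms by (intro Max_ge) auto

lemma masked_Max_le:
  assumes "finite V" "V \<noteq> {}" "\<And>i. i \<in> V \<Longrightarrow> (if i \<in> S then y i else 0) \<le> c"
  shows "masked_Max V S y \<le> c"
  unfolding masked_Max_def using assms by (intro Max.boundedI) (auto simp del: if_image_distrib)

lemma masked_Max_mono:
  assumes "finite V" "S \<subseteq> T" "k \<in> V" "k \<notin> T"
  shows "masked_Max V S y \<le> masked_Max V T y"
proof (rule masked_Max_le)
  fix i assume "i \<in> V"
  then show "(if i \<in> S then y i else 0) \<le> masked_Max V T y"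
    using masked_Max_ge[OF \<open>finite V\<close>, of i T y] masked_Max_ge[OF \<open>finite V\<close> \<open>k \<in> V\<close>, of T y] assms
    by (auto split: if_splits)
qed (use assms in auto)

lemma masked_Max_insert_le:
  assumes "finite V" "V \<noteq> {}"
  shows "masked_Max V (insert j S) y \<le> max (y j) (masked_Max V S y)"
proof (rule masked_Max_le[OF assms])
  fix i assume "i \<in> V"
  then show "(if i \<in> insert j S then y i else 0) \<le> max (y j) (masked_Max V S y)"
    using masked_Max_ge[OF \<open>finite V\<close>, of i S y] by (auto split: if_splits)
qed

lemma masked_Max_insert_ge:
  assumes "finite V" "j \<in> V"
  shows "y j \<le> masked_Max V (insert j S) y"
  using masked_Max_ge[OF assms, of "insert j S"] by simp

lemma submodular_on_masked_Max:
  assumes "finite V"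
  shows "submodular_on V (\<lambda>S. masked_Max V S y)"
  unfolding submodular_on_def
proof (intro allI impI)
  fix A B j assume AB: "A \<subseteq> B" "B \<subseteq> V" and j: "j \<in> V" "j \<notin> B"
  show "masked_Max V (B \<union> {j}) y - masked_Max V B y \<le> masked_Max V (A \<union> {j}) y - masked_Max V A y"
  proof (cases "A \<union> {j} = V")
    case True
    with AB j have "A = B" by blast
    then show ?thesis by simp
  next
    case False
    with AB j obtain k where k: "k \<in> V" "k \<notin> A \<union> {j}" by blast
    have "masked_Max V A y \<le> masked_Max V B y"
      using masked_Max_mono[OF assms] AB j by blast
    moreover have "masked_Max V A y \<le> masked_Max V (A \<union> {j}) y"
      using masked_Max_mono[OF assms _ k] by blast
    moreover have "masked_Max V (B \<union> {j}) y \<le> max (y j) (masked_Max V B y)"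
      using masked_Max_insert_le[OF assms, of j B] j by auto
    moreover have "y j \<le> masked_Max V (A \<union> {j}) y"
      using masked_Max_insert_ge[OF assms j(1)] by simp
    ultimately show ?thesis by linarith
  qed
qed

lemma distr_PiM_componentwise:
  fixes M :: "'i \<Rightarrow> 'a measure" and M' :: "'i \<Rightarrow> 'b measure"
  assumes fin: "finite I"
    and prob: "\<And>i. prob_space (M i)"
    and [measurable]: "\<And>i. f i \<in> M i \<rightarrow>\<^sub>M M' i"
  shows "distr (PiM I M) (PiM I M') (\<lambda>x. \<lambda>i\<in>I. f i (x i)) = PiM I (\<lambda>i. distr (M i) (M' i) (f i))"
proof -
  interpret M: product_prob_space M
    by (intro product_prob_spaceI prob)
  define N where "N = (\<lambda>i. distr (M i) (M' i) (f i))"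
  interpret N: product_prob_space N
    unfolding N_def by (intro product_prob_spaceI prob_space.prob_space_distr prob) simp
  let ?g = "\<lambda>x. \<lambda>i\<in>I. f i (x i)"
  have g: "?g \<in> PiM I M \<rightarrow>\<^sub>M PiM I M'"
    by measurable
  have sets_N: "sets (PiM I N) = sets (PiM I M')"
    unfolding N_def by (intro sets_PiM_cong) auto
  have "distr (PiM I M) (PiM I M') ?g = PiM I N"
  proof (rule N.PiM_eqI[OF fin])
    show "sets (distr (PiM I M) (PiM I M') ?g) = sets (PiM I N)"
      using sets_N by simp
  next
    fix A assume A: "\<And>i. i \<in> I \<Longrightarrow> A i \<in> sets (N i)"
    then have "Pi\<^sub>E I A \<in> sets (PiM I M')"
      unfolding sets_N[symmetric] by (intro sets_PiM_I_finite fin)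
    then have "emeasure (distr (PiM I M) (PiM I M') ?g) (Pi\<^sub>E I A) =
        emeasure (PiM I M) (?g -` Pi\<^sub>E I A \<inter> space (PiM I M))"
      by (rule emeasure_distr[OF g])
    also have "?g -` Pi\<^sub>E I A \<inter> space (PiM I M) = Pi\<^sub>E I (\<lambda>i. f i -` A i \<inter> space (M i))"
      by (auto simp: space_PiM PiE_def Pi_def extensional_def)
    also have "emeasure (PiM I M) \<dots> = (\<Prod>i\<in>I. emeasure (M i) (f i -` A i \<inter> space (M i)))"
      using A by (intro M.emeasure_PiM fin) (auto simp: N_def)
    also have "\<dots> = (\<Prod>i\<in>I. emeasure (N i) (A i))"
      using A by (intro prod.cong) (auto simp: N_def emeasure_distr)
    finally show "emeasure (distr (PiM I M) (PiM I M') ?g) (Pi\<^sub>E I A) = (\<Prod>i\<in>I. emeasure (N i) (A i))" .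
  qed
  then show ?thesis
    by (simp add: N_def)
qed

lemma (in product_prob_space) integrable_PiM_component:
  fixes f :: "'a \<Rightarrow> 'b::{banach, second_countable_topology}"
  assumes "i \<in> I" "integrable (M i) f"
  shows "integrable (PiM I M) (\<lambda>x. f (x i))"
proof -
  have "integrable (distr (PiM I M) (M i) (\<lambda>x. x i)) f"
    using assms by (simp add: PiM_component)
  then show ?thesis
    using assms by (subst (asm) integrable_distr_eq) (auto simp: measurable_component_singleton)
qed

lemma integrable_masked_Max:
  fixes M :: "'i \<Rightarrow> real measure"
  assumes "product_prob_space M" "finite I" "I \<noteq> {}"
    and int: "\<And>i. i \<in> I \<Longrightarrow> integrable (M i) (\<lambda>x. x)"
  shows "integrable (PiM I M) (masked_Max I S)"
proof (rule Bochner_Integration.integrable_bound)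
  interpret product_prob_space M by fact
  have int_comp: "integrable (PiM I M) (\<lambda>x. x i)" if "i \<in> I" for i
    using integrable_PiM_component[OF that int[OF that]] .
  show "integrable (PiM I M) (\<lambda>x. \<Sum>i\<in>I. \<bar>x i\<bar>)"
    using int_comp by (intro Bochner_Integration.integrable_sum integrable_abs) auto
  show "masked_Max I S \<in> borel_measurable (PiM I M)"
    unfolding masked_Max_def using int_comp \<open>finite I\<close>
    by (intro borel_measurable_Max) auto
  show "AE x in PiM I M. norm (masked_Max I S x) \<le> norm (\<Sum>i\<in>I. \<bar>x i\<bar>)"
  proof (intro AE_I2)
    fix x :: "'i \<Rightarrow> real"
    have "masked_Max I S x \<in> (\<lambda>i. if i \<in> S then x i else 0) ` I"
      unfolding masked_Max_def using assms by (intro Max_in) auto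
    then obtain k where "k \<in> I" "\<bar>masked_Max I S x\<bar> \<le> \<bar>x k\<bar>"
      by (auto split: if_splits)
    moreover have "\<bar>x k\<bar> \<le> (\<Sum>i\<in>I. \<bar>x i\<bar>)" if "k \<in> I"
      using \<open>finite I\<close> that by (intro member_le_sum) auto
    ultimately show "norm (masked_Max I S x) \<le> norm (\<Sum>i\<in>I. \<bar>x i\<bar>)"
      by (simp add: sum_nonneg)
  qed
qed

lemma prob_space_gauss: "0 < s \<Longrightarrow> prob_space (gauss s)"
  unfolding gauss_def by (rule prob_space_normal_density)

lemma sets_gauss [simp, measurable_cong]: "sets (gauss s) = sets borel"
  unfolding gauss_def by simp

lemma integrable_gauss: "0 < s \<Longrightarrow> integrable (gauss s) (\<lambda>x. x)"
  unfolding gauss_def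
  by (subst integrable_density) (simp_all add: integrable_normal_moment_nz_1)

lemma gauss_vec_eq_distr:
  assumes "0 < s"
  shows "gauss_vec n s S = distr (PiM {..<n} (\<lambda>_. gauss s)) (PiM {..<n} (\<lambda>_. lborel))
    (\<lambda>y. \<lambda>i\<in>{..<n}. if i \<in> S then y i else 0)"
proof -
  have distr_mask: "distr (gauss s) lborel (\<lambda>x. if i \<in> S then x else 0) =
      (if i \<in> S then gauss s else return lborel 0)" for i
    by (simp add: distr_id2 prob_space.distr_const[OF prob_space_gauss[OF assms]])
  show ?thesis
    unfolding gauss_vec_def
    by (subst distr_PiM_componentwise[where f = "\<lambda>i x. if i \<in> S then x else 0"])
       (simp_all add: prob_space_gauss[OF assms] distr_mask)
qed

lemma exp_max_eq_integral_masked_Max: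
  assumes "0 < s"
  shows "exp_max n s S = (\<integral>y. masked_Max {..<n} S y \<partial>PiM {..<n} (\<lambda>_. gauss s))"
proof -
  have "exp_max n s S = (\<integral>y. Max ((\<lambda>i\<in>{..<n}. if i \<in> S then y i else 0) ` {..<n})
      \<partial>PiM {..<n} (\<lambda>_. gauss s))"
    unfolding exp_max_def gauss_vec_eq_distr[OF assms] by (rule integral_distr) measurable
  also have "\<dots> = (\<integral>y. masked_Max {..<n} S y \<partial>PiM {..<n} (\<lambda>_. gauss s))"
    unfolding masked_Max_def by (intro Bochner_Integration.integral_cong arg_cong[where f = Max] image_cong) auto
  finally show ?thesis .
qed

theorem lemma6:
  fixes n :: nat and \<sigma>\<^sub>0 :: real
  assumes "\<sigma>\<^sub>0 > 0"
  shows "submodular_on {..<n} (exp_max n \<sigma>\<^sub>0)"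
proof (cases "n = 0")
  case True
  then show ?thesis
    by (simp add: submodular_on_def)
next
  case False
  have "product_prob_space (\<lambda>_ :: nat. gauss \<sigma>\<^sub>0)"
    by (intro product_prob_spaceI prob_space_gauss assms)
  then have "submodular_on {..<n} (\<lambda>S. \<integral>y. masked_Max {..<n} S y \<partial>PiM {..<n} (\<lambda>_. gauss \<sigma>\<^sub>0))"
    using False assms
    by (intro submodular_on_integral submodular_on_masked_Max integrable_masked_Max integrable_gauss) auto
  moreover have "exp_max n \<sigma>\<^sub>0 = (\<lambda>S. \<integral>y. masked_Max {..<n} S y \<partial>PiM {..<n} (\<lambda>_. gauss \<sigma>\<^sub>0))"
    by (intro ext exp_max_eq_integral_masked_Max assms)
  ultimately show ?thesis
    by simp
qed

end
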